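(* Let $S$ be an expanding automaton semigroup over an alphabet $\Sigma$ (i.e. $S=S(\mathcal{A})$ for an expanding automaton $\mathcal{A}$ over $\Sigma$), and let $P_\Sigma$ be the set of primes dividing $|\Sigma|!$. If $s\in S$ satisfies $s^m=s^n$ for some $m<n$ with $s,s^2,\dots,s^{n-1}$ pairwise distinct, then every prime divisor of $n-m$ lies in $P_\Sigma$.
   Context: An expanding automaton is a quadruple $\mathcal{A}=(Q,\Sigma,t,o)$ with $Q$ a finite set of states, $\Sigma$ a finite alphabet, $t:Q\times\Sigma\to Q$ and $o:Q\times\Sigma\to\Sigma^+$. Each state $q$ induces $q:\Sigma^*\to\Sigma^*$ by $q(\emptyset)=\emptyset$ and $q(\sigma w)=o(q,\sigma)\,q'(w)$ with $q'=t(q,\sigma)$. $S(\mathcal{A})$ is the semigroup of maps $\Sigma^*\to\Sigma^*$ generated under composition by the states. *)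

theory Defs
  imports "HOL-Computational_Algebra.Primes"
begin

text \<open>An automaton with state type 'q (Q = UNIV, finite) over alphabet type 'a
(Sigma = UNIV, finite), transition tr and output out.  It is expanding if
every output word is nonempty.\<close>

definition expanding :: "('q \<Rightarrow> 'a \<Rightarrow> 'a list) \<Rightarrow> bool" where
  "expanding out \<longleftrightarrow> (\<forall>q x. out q x \<noteq> [])"

fun amap :: "('q \<Rightarrow> 'a \<Rightarrow> 'q) \<Rightarrow> ('q \<Rightarrow> 'a \<Rightarrow> 'a list) \<Rightarrow> 'q \<Rightarrow> 'a list \<Rightarrow> 'a list" where
  "amap tr out q [] = []"
| "amap tr out q (x # w) = out q x @ amap tr out (tr q x) w"

inductive_set aut_sg :: "('q \<Rightarrow> 'a \<Rightarrow> 'q) \<Rightarrow> ('q \<Rightarrow> 'a \<Rightarrow> 'a list) \<Rightarrow> ('a list \<Rightarrow> 'a list) set"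
  for tr out where
  gen: "amap tr out q \<in> aut_sg tr out"
| comp: "f \<in> aut_sg tr out \<Longrightarrow> g \<in> aut_sg tr out \<Longrightarrow> f \<circ> g \<in> aut_sg tr out"

end

theory Submission
  imports Defs
begin

text \<open>
  Every map f in S(A) is sequential: it never shortens words, and
  f(uw) = f(u) g(w) for some map g that never shortens words either.  If s^m = s^n with
  m < n, then lengths can only grow along s, s^2, ..., so s preserves lengths on the
  eventual image X = s^m(\<Sigma>^*); a sequential map that preserves the length of y commutes
  with taking prefixes of y.  Now let p be a prime dividing n - m with p > |\<Sigma>|, and put
  g = s^c with c = (n - m)/p.  Then g^p is the identity on X.  Inducting on the prefix
  length, the g-orbit of a prefix u c of a word of X stays inside u \<Sigma>, a set of at most
  |\<Sigma>| < p words; an orbit of length dividing the prime p but smaller than p is trivial,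
  so g fixes X pointwise.  Hence s^(m+c) = s^m with m < m + c < n, contradicting that
  s, ..., s^(n-1) are distinct.  So every prime divisor of n - m is at most |\<Sigma>|, i.e.
  divides |\<Sigma>|!.
\<close>

lemma funpow_gcd_fixed:
  fixes a b :: nat
  assumes "(f ^^ a) x = x" "(f ^^ b) x = x" "a \<noteq> 0"
  shows "(f ^^ gcd a b) x = x"
proof -
  obtain u v where uv: "a * u = b * v + gcd a b"
    using bezout_nat[OF assms(3), of b] by blast
  have "(f ^^ gcd a b) x = (f ^^ gcd a b) ((f ^^ (b * v)) x)"
    using funpow_mod_eq[OF assms(2), of "b * v"] by simp
  also have "\<dots> = (f ^^ (a * u)) x"
    by (simp only: uv funpow_add comp_apply add.commute)
  also have "\<dots> = x"
    using funpow_mod_eq[OF assms(1), of "a * u"] by simp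
  finally show ?thesis .
qed

text \<open>If x has prime period p under f and is not fixed, its orbit has exactly p
  distinct points: a repetition would give a period strictly between 0 and p.\<close>
lemma prime_period_orbit_inj:
  assumes p: "prime p" and per: "(f ^^ p) x = x" and moved: "f x \<noteq> x"
  shows "inj_on (\<lambda>i. (f ^^ i) x) {..<p}"
proof (rule linorder_inj_onI', rule notI)
  fix i j assume ij: "i < j" "j \<in> {..<p}" and eq: "(f ^^ i) x = (f ^^ j) x"
  define d where "d = p - j + i"
  have d: "0 < d" "d < p" using ij unfolding d_def by auto
  have "(f ^^ d) x = (f ^^ (p - j)) ((f ^^ i) x)"
    by (simp add: d_def funpow_add)
  also have "\<dots> = (f ^^ (p - j + j)) x"
    by (simp only: eq funpow_add comp_apply)
  also have "\<dots> = x" using ij per by simp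
  finally have "(f ^^ d) x = x" .
  moreover have "gcd d p = 1"
  proof -
    have "\<not> p dvd d" using d by (auto dest: dvd_imp_le)
    then have "coprime p d" using p by (simp add: prime_imp_coprime)
    then show ?thesis by (simp add: coprime_commute)
  qed
  ultimately have "f x = x"
    using funpow_gcd_fixed[OF _ per, of d] d by simp
  with moved show False ..
qed

lemma prime_period_small_orbit_fixed:
  assumes p: "prime p" and per: "(f ^^ p) x = x"
    and Y: "finite Y" "card Y < p" and orbit: "\<And>j. (f ^^ j) x \<in> Y"
  shows "f x = x"
proof (rule ccontr)
  assume "f x \<noteq> x"
  then have "inj_on (\<lambda>i. (f ^^ i) x) {..<p}"
    using prime_period_orbit_inj[OF p per] by blast
  then have "card {..<p} \<le> card Y"
    using card_inj_on_le[OF _ _ Y(1)] orbit by blast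
  with Y(2) show False by simp
qed

definition nonshrinking :: "('a list \<Rightarrow> 'a list) \<Rightarrow> bool" where
  "nonshrinking f \<longleftrightarrow> (\<forall>w. length w \<le> length (f w))"

definition sequential :: "('a list \<Rightarrow> 'a list) \<Rightarrow> bool" where
  "sequential f \<longleftrightarrow> nonshrinking f \<and> (\<forall>u w. \<exists>g. f (u @ w) = f u @ g w \<and> nonshrinking g)"

lemma amap_nonshrinking:
  assumes "expanding out"
  shows "nonshrinking (amap tr out q)"
  unfolding nonshrinking_def
proof
  fix w show "length w \<le> length (amap tr out q w)"
  proof (induction w arbitrary: q)
    case (Cons x w)
    have "out q x \<noteq> []" using assms by (simp add: expanding_def)
    with Cons[of "tr q x"] show ?case by (cases "out q x") auto
  qed simp
qed

lemma amap_append: "\<exists>q'. amap tr out q (u @ w) = amap tr out q u @ amap tr out q' w"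
  by (induction u arbitrary: q) auto

lemma sequential_comp:
  assumes f: "sequential f" and g: "sequential g"
  shows "sequential (f \<circ> g)"
  unfolding sequential_def
proof (intro conjI allI)
  show "nonshrinking (f \<circ> g)"
    using f g unfolding sequential_def nonshrinking_def by (auto intro: le_trans)
next
  fix u w
  obtain g' where g': "g (u @ w) = g u @ g' w" "nonshrinking g'"
    using g unfolding sequential_def by blast
  obtain f' where f': "f (g u @ g' w) = f (g u) @ f' (g' w)" "nonshrinking f'"
    using f unfolding sequential_def by blast
  have "nonshrinking (f' \<circ> g')"
    using f'(2) g'(2) unfolding nonshrinking_def by (auto intro: le_trans)
  with g'(1) f'(1) show "\<exists>h. (f \<circ> g) (u @ w) = (f \<circ> g) u @ h w \<and> nonshrinking h"
    by (intro exI[of _ "f' \<circ> g'"]) simp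
qed

lemma aut_sg_sequential:
  assumes "expanding out" "f \<in> aut_sg tr out"
  shows "sequential f"
  using assms(2)
proof induction
  case (gen q)
  show ?case
    unfolding sequential_def
    using amap_nonshrinking[OF assms(1)] amap_append[of tr out q] by blast
next
  case (comp f g)
  then show ?case using sequential_comp by blast
qed

text \<open>A sequential map preserving the length of y commutes with prefixes of y: the
  image of a prefix cannot be longer than the prefix, since the rest of y is not
  shortened either.\<close>
lemma sequential_take:
  assumes f: "sequential f" and len: "length (f y) = length y"
  shows "take l (f y) = f (take l y)"
proof (cases "length y \<le> l")
  case True then show ?thesis using len by simp
next
  case False
  obtain g where g: "f (take l y @ drop l y) = f (take l y) @ g (drop l y)" "nonshrinking g"
    using f unfolding sequential_def by blast
  have "length (take l y) \<le> length (f (take l y))"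
    using f unfolding sequential_def nonshrinking_def by blast
  moreover have "length (drop l y) \<le> length (g (drop l y))"
    using g(2) unfolding nonshrinking_def by blast
  moreover have "length (f (take l y)) + length (g (drop l y)) = length y"
    using g(1) len by simp
  ultimately have "length (f (take l y)) = l"
    using False by simp
  then show ?thesis using g(1) by simp
qed

lemma nonshrinking_funpow_mono:
  assumes "nonshrinking s" "i \<le> j"
  shows "length ((s ^^ i) w) \<le> length ((s ^^ j) w)"
  using assms(2)
proof (induction j rule: dec_induct)
  case (step j)
  then show ?case
    using assms(1) unfolding nonshrinking_def by (auto intro: le_trans)
qed simp

definition synchronous_on :: "'a list set \<Rightarrow> ('a list \<Rightarrow> 'a list) \<Rightarrow> bool" where
  "synchronous_on X g \<longleftrightarrow>
    (\<forall>y\<in>X. g y \<in> X \<and> length (g y) = length y \<and> (\<forall>l. take l (g y) = g (take l y)))"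

lemma synchronous_on_funpow:
  assumes "synchronous_on X g"
  shows "synchronous_on X (g ^^ j)"
proof (induction j)
  case 0 then show ?case by (simp add: synchronous_on_def)
next
  case (Suc j)
  then show ?case using assms by (simp add: synchronous_on_def)
qed

text \<open>On the eventual image of a sequential map s with s^m = s^n (m < n), lengths
  cannot grow along the cycle s^m, ..., s^n, so s is synchronous there.\<close>
lemma eventual_image_synchronous:
  assumes seq: "sequential s" and mn: "m < n" and eq: "s ^^ m = s ^^ n"
  shows "synchronous_on (range (s ^^ m)) s"
  unfolding synchronous_on_def
proof
  fix y assume "y \<in> range (s ^^ m)"
  then obtain w where w: "y = (s ^^ m) w" by blast
  have ns: "nonshrinking s" using seq unfolding sequential_def by blast
  have "length ((s ^^ Suc m) w) \<le> length ((s ^^ n) w)"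
    using nonshrinking_funpow_mono[OF ns, of "Suc m" n] mn by simp
  moreover have "length ((s ^^ m) w) \<le> length ((s ^^ Suc m) w)"
    using nonshrinking_funpow_mono[OF ns, of m "Suc m"] by simp
  ultimately have len: "length (s y) = length y"
    using eq w by simp
  have "s y = (s ^^ m) (s w)" using w by (simp add: funpow_swap1)
  then show "s y \<in> range (s ^^ m) \<and> length (s y) = length y \<and> (\<forall>l. take l (s y) = s (take l y))"
    using len sequential_take[OF seq len] by blast
qed

text \<open>By induction on l, g fixes the prefix of length l;
  the orbit of the next prefix u c then stays in u \<Sigma>, which has fewer than p elements.\<close>
lemma synchronous_prime_period_fixed:
  fixes g :: "'a::finite list \<Rightarrow> 'a list"
  assumes sync: "synchronous_on X g" and p: "prime p" "card (UNIV :: 'a set) < p"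
    and v: "v \<in> X" and per: "(g ^^ p) v = v"
  shows "g v = v"
proof -
  have iter: "length ((g ^^ j) v) = length v \<and> (\<forall>l. take l ((g ^^ j) v) = (g ^^ j) (take l v))"
    for j using synchronous_on_funpow[OF sync, of j] v unfolding synchronous_on_def by blast
  have prefix_fixed: "g (take l v) = take l v" for l
  proof (induction l)
    case 0
    have "take 0 (g v) = g (take 0 v)" using sync v unfolding synchronous_on_def by blast
    then show ?case by simp
  next
    case (Suc l)
    define u where "u = take l v"
    define z where "z = take (Suc l) v"
    show ?case
    proof (cases "length v \<le> l")
      case True
      then show ?thesis using Suc by simp
    next
      case False
      have zj: "(g ^^ j) z = take (Suc l) ((g ^^ j) v)" for j
        using iter unfolding z_def by auto
      define Y where "Y = (\<lambda>c. u @ [c]) ` (UNIV :: 'a set)"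
      have orbit: "(g ^^ j) z \<in> Y" for j
      proof -
        have "take l ((g ^^ j) z) = take l ((g ^^ j) v)"
          using zj[of j] by simp
        also have "\<dots> = (g ^^ j) u"
          using iter[of j] unfolding u_def by blast
        also have "\<dots> = u" using Suc.IH unfolding u_def by (induction j) auto
        finally have prefix: "take l ((g ^^ j) z) = u" .
        have "length ((g ^^ j) v) = length v" using iter by blast
        then have "length (drop l ((g ^^ j) z)) = 1"
          using False by (simp add: zj)
        then obtain c where "drop l ((g ^^ j) z) = [c]"
          by (cases "drop l ((g ^^ j) z)") auto
        then have "(g ^^ j) z = u @ [c]"
          using prefix append_take_drop_id[of l "(g ^^ j) z"] by simp
        then show ?thesis unfolding Y_def by blast
      qed
      have "(g ^^ p) z = z" using zj[of p] per unfolding z_def by simp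
      moreover have "finite Y" unfolding Y_def by simp
      moreover have "card Y < p"
        using card_image_le[of UNIV "\<lambda>c. u @ [c]"] p(2) unfolding Y_def by simp
      ultimately have "g z = z"
        by (rule prime_period_small_orbit_fixed[OF p(1) _ _ _ orbit])
      then show ?thesis unfolding z_def .
    qed
  qed
  show ?thesis using prefix_fixed[of "length v"] by simp
qed

theorem mainTheorem9:
  fixes tr :: "'q::finite \<Rightarrow> 'a::finite \<Rightarrow> 'q"
    and out :: "'q \<Rightarrow> 'a \<Rightarrow> 'a list"
    and s :: "'a list \<Rightarrow> 'a list"
    and m n p :: nat
  assumes "expanding out"
    and "s \<in> aut_sg tr out"
    and "1 \<le> m" and "m < n"
    and "s ^^ m = s ^^ n"
    and "inj_on (\<lambda>i. s ^^ i) {1..<n}"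
    and "prime p" and "p dvd (n - m)"
  shows "p dvd fact (card (UNIV :: 'a set))"
proof (rule ccontr)
  assume "\<not> p dvd fact (card (UNIV :: 'a set))"
  then have p_large: "card (UNIV :: 'a set) < p" using prime_dvd_fact_iff[OF assms(7)] by simp
  obtain c where c: "n - m = p * c" using assms(8) by (rule dvdE)
  have "c \<noteq> 0" using c assms(4) by (metis mult_0_right zero_less_diff less_irrefl)
  then have c_range: "1 \<le> c" "c < n - m"
    using c prime_gt_1_nat[OF assms(7)] by auto
  have "synchronous_on (range (s ^^ m)) s"
    by (rule eventual_image_synchronous[OF aut_sg_sequential[OF assms(1,2)] assms(4,5)])
  then have sync: "synchronous_on (range (s ^^ m)) (s ^^ c)"
    by (rule synchronous_on_funpow)
  have "(s ^^ (c + m)) w = (s ^^ m) w" for w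
  proof -
    have period: "p * c + m = n" using c assms(4) by simp
    have "((s ^^ c) ^^ p) ((s ^^ m) w) = (s ^^ (p * c + m)) w"
      by (simp only: funpow_mult funpow_add comp_apply mult.commute)
    also have "\<dots> = (s ^^ m) w" using period assms(5) by simp
    finally have "(s ^^ c) ((s ^^ m) w) = (s ^^ m) w"
      by (rule synchronous_prime_period_fixed[OF sync assms(7) p_large rangeI])
    then show ?thesis by (simp only: funpow_add comp_apply)
  qed
  then have "s ^^ (c + m) = s ^^ m" by blast
  moreover have "c + m \<in> {1..<n}" "m \<in> {1..<n}" using c_range assms(3,4) by auto
  ultimately have "c + m = m" using inj_onD[OF assms(6)] by blast
  with c_range show False by simp
qed

end
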